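(* The regular tensor product $\mathfrak{S}_A\widehat{\otimes}\mathfrak{S}_B$ is a sub Inf semi-lattice of the maximal tensor product $\check{S}_{AB}$, and $\mathfrak{S}_A\widetilde{\otimes}\mathfrak{S}_B\subseteq\mathfrak{S}_A\widehat{\otimes}\mathfrak{S}_B$.
   Context: $\mathfrak{B}=\{\mathbf{Y},\mathbf{N},\bot\}$ with $\bot$ below the incomparable $\mathbf{Y},\mathbf{N}$, meet $\wedge$, involution $\overline{\cdot}$ and product $\bullet$ ($x\bullet\mathbf{Y}=x$, $x\bullet\mathbf{N}=\mathbf{N}$, $\bot\bullet\bot=\bot$). $(\mathfrak{S}_A,\mathfrak{E}_A,\epsilon^{\mathfrak{S}_A})$, $(\mathfrak{S}_B,\mathfrak{E}_B,\epsilon^{\mathfrak{S}_B})$ are States/Effects Chu spaces (effects with negation $\overline{\mathfrak{l}}$, constant-$\mathbf{Y}$ effect $\mathfrak{Y}_{\mathfrak{E}}$, bottom effect $\bot_{\mathfrak{E}}$). $\check{S}_{AB}$ is the set of maps $\Phi:\mathfrak{E}_A\times\mathfrak{E}_B\to\mathfrak{B}$ preserving arbitrary infima in each variable with $\Phi(\overline{\mathfrak{l}_A},\mathfrak{Y}_{\mathfrak{E}_B})=\overline{\Phi(\mathfrak{l}_A,\mathfrak{Y}_{\mathfrak{E}_B})}$, $\Phi(\mathfrak{Y}_{\mathfrak{E}_A},\overline{\mathfrak{l}_B})=\overline{\Phi(\mathfrak{Y}_{\mathfrak{E}_A},\mathfrak{l}_B)}$, $\Phi(\mathfrak{Y}_{\mathfrak{E}_A},\mathfrak{Y}_{\mathfrak{E}_B})=\mathbf{Y}$,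 ordered pointwise. $\mathfrak{S}_A\widetilde{\otimes}\mathfrak{S}_B$ is its subset of maps $(\mathfrak{l}_A,\mathfrak{l}_B)\mapsto\bigwedge_{i}\epsilon_{\mathfrak{l}_A}(\sigma_{i,A})\bullet\epsilon_{\mathfrak{l}_B}(\sigma_{i,B})$. $\mathfrak{S}_A\widehat{\otimes}\mathfrak{S}_B$ is the set of $\Phi\in\check{S}_{AB}$ such that: $\Phi(\mathfrak{l}_A,\overline{\mathfrak{Y}_{\mathfrak{E}_B}})=\Phi(\overline{\mathfrak{Y}_{\mathfrak{E}_A}},\mathfrak{l}_B)=\mathbf{N}$ for all $\mathfrak{l}_A,\mathfrak{l}_B$; if $\Phi(\mathfrak{l}_A,\mathfrak{Y}_{\mathfrak{E}_B})=\mathbf{Y}$ then $(\Phi(\mathfrak{l}_A,\mathfrak{l}_B),\Phi(\mathfrak{l}_A,\overline{\mathfrak{l}_B}))\in\{(\mathbf{Y},\mathbf{N}),(\mathbf{N},\mathbf{Y}),(\bot,\bot)\}$ for all $\mathfrak{l}_B$, and symmetrically in $A$; if $\Phi(\mathfrak{l}_A,\mathfrak{Y}_{\mathfrak{E}_B})=\bot$ then for all $\mathfrak{l}_B,\mathfrak{l}'_B$ with $\mathfrak{l}_B\sqcap\mathfrak{l}'_B=\bot_{\mathfrak{E}_B}$, $(\Phi(\mathfrak{l}_A,\mathfrak{l}_B),\Phi(\mathfrak{l}_A,\mathfrak{l}'_B))\in\{(\bot,\mathbf{N}),(\mathbf{N},\bot),(\bot,\bot)\}$, and symmetrically in $A$.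 *)

theory Defs
  imports Main
begin

datatype bv = Yb | Nb | Bt

definition ble :: "bv \<Rightarrow> bv \<Rightarrow> bool" where
  "ble x y \<longleftrightarrow> x = Bt \<or> x = y"

text \<open>Infimum of a nonempty subset of B (only used for nonempty sets).\<close>
definition bInf :: "bv set \<Rightarrow> bv" where
  "bInf X = (if \<exists>x. X = {x} then the_elem X else Bt)"

definition bmeet :: "bv \<Rightarrow> bv \<Rightarrow> bv" where
  "bmeet x y = bInf {x, y}"

fun bneg :: "bv \<Rightarrow> bv" where
  "bneg Yb = Nb" | "bneg Nb = Yb" | "bneg Bt = Bt"

fun bprod :: "bv \<Rightarrow> bv \<Rightarrow> bv" where
  "bprod x Yb = x"
| "bprod x Nb = Nb"
| "bprod Yb Bt = Bt"
| "bprod Nb Bt = Nb"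
| "bprod Bt Bt = Bt"

text \<open>States are the elements of the type 's; an effect is identified with its
  evaluation map l, so that epsilon_l(sigma) = l sigma (extensional Chu space).\<close>

definition effInf :: "('s \<Rightarrow> bv) set \<Rightarrow> ('s \<Rightarrow> bv)" where
  "effInf L = (\<lambda>\<sigma>. bInf ((\<lambda>l. l \<sigma>) ` L))"

definition effMeet :: "('s \<Rightarrow> bv) \<Rightarrow> ('s \<Rightarrow> bv) \<Rightarrow> ('s \<Rightarrow> bv)" where
  "effMeet l l' = effInf {l, l'}"

definition effNeg :: "('s \<Rightarrow> bv) \<Rightarrow> ('s \<Rightarrow> bv)" where
  "effNeg l = (\<lambda>\<sigma>. bneg (l \<sigma>))"

definition effY :: "'s \<Rightarrow> bv" where
  "effY = (\<lambda>_. Yb)"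

definition effBot :: "'s \<Rightarrow> bv" where
  "effBot = (\<lambda>_. Bt)"

definition effect_space :: "('s \<Rightarrow> bv) set \<Rightarrow> bool" where
  "effect_space E \<longleftrightarrow>
     effY \<in> E \<and> (\<forall>l\<in>E. effNeg l \<in> E) \<and>
     (\<forall>L. L \<subseteq> E \<and> L \<noteq> {} \<longrightarrow> effInf L \<in> E)"

type_synonym ('a, 'b) bimap = "('a \<Rightarrow> bv) \<Rightarrow> ('b \<Rightarrow> bv) \<Rightarrow> bv"

text \<open>Maps on E_A x E_B are represented as total functions which are Bt outside
  E_A x E_B.\<close>

definition maxTensor :: "('a \<Rightarrow> bv) set \<Rightarrow> ('b \<Rightarrow> bv) set \<Rightarrow> ('a, 'b) bimap set" where
  "maxTensor EA EB = {\<Phi>.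
     (\<forall>lA lB. \<not> (lA \<in> EA \<and> lB \<in> EB) \<longrightarrow> \<Phi> lA lB = Bt) \<and>
     (\<forall>lA\<in>EA. \<forall>L. L \<subseteq> EB \<and> L \<noteq> {} \<longrightarrow> \<Phi> lA (effInf L) = bInf (\<Phi> lA ` L)) \<and>
     (\<forall>lB\<in>EB. \<forall>L. L \<subseteq> EA \<and> L \<noteq> {} \<longrightarrow> \<Phi> (effInf L) lB = bInf ((\<lambda>lA. \<Phi> lA lB) ` L)) \<and>
     (\<forall>lA\<in>EA. \<Phi> (effNeg lA) effY = bneg (\<Phi> lA effY)) \<and>
     (\<forall>lB\<in>EB. \<Phi> effY (effNeg lB) = bneg (\<Phi> effY lB)) \<and>
     \<Phi> effY effY = Yb}"

definition bimapLe :: "('a \<Rightarrow> bv) set \<Rightarrow> ('b \<Rightarrow> bv) set \<Rightarrow> ('a, 'b) bimap \<Rightarrow> ('a, 'b) bimap \<Rightarrow> bool" where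
  "bimapLe EA EB \<Phi> \<Psi> \<longleftrightarrow> (\<forall>lA\<in>EA. \<forall>lB\<in>EB. ble (\<Phi> lA lB) (\<Psi> lA lB))"

definition bimapInf :: "('a \<Rightarrow> bv) set \<Rightarrow> ('b \<Rightarrow> bv) set \<Rightarrow> ('a, 'b) bimap set \<Rightarrow> ('a, 'b) bimap" where
  "bimapInf EA EB F = (\<lambda>lA lB. if lA \<in> EA \<and> lB \<in> EB then bInf ((\<lambda>\<Phi>. \<Phi> lA lB) ` F) else Bt)"

definition minTensor :: "('a \<Rightarrow> bv) set \<Rightarrow> ('b \<Rightarrow> bv) set \<Rightarrow> ('a, 'b) bimap set" where
  "minTensor EA EB = {\<Phi>. \<exists>P :: ('a \<times> 'b) set. P \<noteq> {} \<and>
     \<Phi> = (\<lambda>lA lB. if lA \<in> EA \<and> lB \<in> EB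
                   then bInf ((\<lambda>(\<sigma>A, \<sigma>B). bprod (lA \<sigma>A) (lB \<sigma>B)) ` P) else Bt)}"

definition regTensor :: "('a \<Rightarrow> bv) set \<Rightarrow> ('b \<Rightarrow> bv) set \<Rightarrow> ('a, 'b) bimap set" where
  "regTensor EA EB = {\<Phi> \<in> maxTensor EA EB.
     (\<forall>lA\<in>EA. \<Phi> lA (effNeg effY) = Nb) \<and>
     (\<forall>lB\<in>EB. \<Phi> (effNeg effY) lB = Nb) \<and>
     (\<forall>lA\<in>EA. \<Phi> lA effY = Yb \<longrightarrow>
        (\<forall>lB\<in>EB. (\<Phi> lA lB, \<Phi> lA (effNeg lB)) \<in> {(Yb, Nb), (Nb, Yb), (Bt, Bt)})) \<and>
     (\<forall>lB\<in>EB. \<Phi> effY lB = Yb \<longrightarrow>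
        (\<forall>lA\<in>EA. (\<Phi> lA lB, \<Phi> (effNeg lA) lB) \<in> {(Yb, Nb), (Nb, Yb), (Bt, Bt)})) \<and>
     (\<forall>lA\<in>EA. \<Phi> lA effY = Bt \<longrightarrow>
        (\<forall>lB\<in>EB. \<forall>lB'\<in>EB. effMeet lB lB' = effBot \<longrightarrow>
           (\<Phi> lA lB, \<Phi> lA lB') \<in> {(Bt, Nb), (Nb, Bt), (Bt, Bt)})) \<and>
     (\<forall>lB\<in>EB. \<Phi> effY lB = Bt \<longrightarrow>
        (\<forall>lA\<in>EA. \<forall>lA'\<in>EA. effMeet lA lA' = effBot \<longrightarrow>
           (\<Phi> lA lB, \<Phi> lA' lB) \<in> {(Bt, Nb), (Nb, Bt), (Bt, Bt)}))}"

end

theory Submission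
  imports Defs
begin

(* Every defining condition of the maximal and of the regular tensor product constrains one
   slice at a time: the map Phi(l_A, -) on E_B for fixed l_A, or Phi(-, l_B) on E_A for fixed
   l_B.  Each slice condition survives pointwise infima of nonempty families.  The one delicate
   case is an infimum with value bot at the unit effect Y although no member has value bot there:
   then some member is N at Y and, preserving infima and being N at not-Y, is N everywhere, while
   another member is Y at Y and so, since its value at bot = Y meet not-Y is bot, is not N on two
   disjoint effects.  The slices of a pure tensor are l |-> c * l(sigma), which are regular, and
   the minimal tensor product consists of the infima of nonempty families of pure tensors. *)

lemma bInf_singleton [simp]: "bInf {x} = x"
  by (simp add: bInf_def)

lemma bInf_eq_iff:
  assumes "X \<noteq> {}" "v \<noteq> Bt"
  shows "bInf X = v \<longleftrightarrow> (\<forall>x\<in>X. x = v)"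
proof -
  have "bInf X = v \<longleftrightarrow> X = {v}"
    using assms(2) by (auto simp: bInf_def)
  also have "\<dots> \<longleftrightarrow> (\<forall>x\<in>X. x = v)"
    using assms(1) by auto
  finally show ?thesis .
qed

lemma bInf_lower: "x \<in> X \<Longrightarrow> ble (bInf X) x"
  by (auto simp: bInf_def ble_def)

lemma bInf_greatest:
  assumes "X \<noteq> {}" "\<And>x. x \<in> X \<Longrightarrow> ble y x"
  shows "ble y (bInf X)"
proof (cases "y = Bt")
  case False
  then have "bInf X = y"
    using assms by (simp add: bInf_eq_iff ble_def)
  then show ?thesis
    by (simp add: ble_def)
qed (simp add: ble_def)

lemma bInf_eqI:
  assumes "X \<noteq> {}" "Y \<noteq> {}" "\<And>v. v \<noteq> Bt \<Longrightarrow> (\<forall>x\<in>X. x = v) \<longleftrightarrow> (\<forall>y\<in>Y. y = v)"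
  shows "bInf X = bInf Y"
  using assms by (metis bInf_eq_iff)

lemma bInf_image_commute:
  assumes "P \<noteq> {}" "L \<noteq> {}"
  shows "bInf ((\<lambda>p. bInf (g p ` L)) ` P) = bInf ((\<lambda>l. bInf ((\<lambda>p. g p l) ` P)) ` L)"
  using assms by (intro bInf_eqI) (auto simp: bInf_eq_iff)

lemma bneg_bneg [simp]: "bneg (bneg x) = x"
  by (cases x) auto

lemma bInf_image_bneg: "bInf (bneg ` X) = bneg (bInf X)"
proof -
  have "bneg ` X = {v} \<longleftrightarrow> X = {bneg v}" for v
  proof
    assume "bneg ` X = {v}"
    then have "bneg ` bneg ` X = {bneg v}"
      by simp
    then show "X = {bneg v}"
      by (simp add: image_image)
  qed simp
  then show ?thesis
    unfolding bInf_def by auto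
qed

lemma bprod_Yb_left [simp]: "bprod Yb y = y"
  by (cases y) auto

lemma bprod_Nb_left [simp]: "bprod Nb y = Nb"
  by (cases y) auto

lemma bprod_comm: "bprod x y = bprod y x"
  by (cases x; cases y) auto

lemma bprod_bInf_right:
  assumes "Y \<noteq> {}"
  shows "bprod x (bInf Y) = bInf (bprod x ` Y)"
proof (cases x)
  case Bt
  have Nb_iff: "bprod Bt y = Nb \<longleftrightarrow> y = Nb" and not_Yb: "bprod Bt y \<noteq> Yb" for y
    by (cases y; simp)+
  have "bInf (bprod Bt ` Y) = Nb \<longleftrightarrow> bInf Y = Nb"
    using assms Nb_iff by (simp add: bInf_eq_iff)
  moreover have "bInf (bprod Bt ` Y) \<noteq> Yb"
    using assms not_Yb by (auto simp: bInf_eq_iff)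
  ultimately show ?thesis
    using Bt by (cases "bInf Y"; cases "bInf (bprod Bt ` Y)") auto
qed (use assms in \<open>auto simp: image_constant_conv\<close>)

lemma
  assumes "effect_space E"
  shows effect_space_effY: "effY \<in> E"
    and effect_space_effNeg: "l \<in> E \<Longrightarrow> effNeg l \<in> E"
    and effect_space_effInf: "L \<subseteq> E \<Longrightarrow> L \<noteq> {} \<Longrightarrow> effInf L \<in> E"
  using assms by (auto simp: effect_space_def)

lemma effMeet_effY_effNeg_effY: "effMeet effY (effNeg effY) = effBot"
  by (auto simp: effMeet_def effInf_def effY_def effNeg_def effBot_def bInf_def)

lemma effMeet_effBot_left: "effMeet effBot l = effBot"
  by (auto simp: effMeet_def effInf_def effBot_def bInf_def)

lemma effect_space_effBot: "effect_space E \<Longrightarrow> effBot \<in> E"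
  using effect_space_effInf[of E "{effY, effNeg effY}"]
  by (simp add: effect_space_effY effect_space_effNeg flip: effMeet_def effMeet_effY_effNeg_effY)

lemma effMeet_eq_effBot_not_both_Nb: "effMeet l l' = effBot \<Longrightarrow> \<not> (l s = Nb \<and> l' s = Nb)"
  by (auto simp: effMeet_def effInf_def effBot_def dest: fun_cong[where x = s])

definition inf_preserving :: "('s \<Rightarrow> bv) set \<Rightarrow> (('s \<Rightarrow> bv) \<Rightarrow> bv) \<Rightarrow> bool" where
  "inf_preserving E \<phi> \<longleftrightarrow> (\<forall>L. L \<subseteq> E \<and> L \<noteq> {} \<longrightarrow> \<phi> (effInf L) = bInf (\<phi> ` L))"

definition neg_preserving :: "('s \<Rightarrow> bv) set \<Rightarrow> (('s \<Rightarrow> bv) \<Rightarrow> bv) \<Rightarrow> bool" where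
  "neg_preserving E \<phi> \<longleftrightarrow> (\<forall>l\<in>E. \<phi> (effNeg l) = bneg (\<phi> l))"

definition regular_slice :: "('s \<Rightarrow> bv) set \<Rightarrow> (('s \<Rightarrow> bv) \<Rightarrow> bv) \<Rightarrow> bool" where
  "regular_slice E \<phi> \<longleftrightarrow> \<phi> (effNeg effY) = Nb \<and>
     (\<phi> effY = Yb \<longrightarrow> neg_preserving E \<phi>) \<and>
     (\<phi> effY = Bt \<longrightarrow> (\<forall>l\<in>E. \<forall>l'\<in>E. effMeet l l' = effBot \<longrightarrow>
        \<phi> l \<noteq> Yb \<and> \<phi> l' \<noteq> Yb \<and> (\<phi> l = Bt \<or> \<phi> l' = Bt)))"

lemma inf_preserving_effMeet:
  "inf_preserving E \<phi> \<Longrightarrow> l \<in> E \<Longrightarrow> l' \<in> E \<Longrightarrow> \<phi> (effMeet l l') = bInf {\<phi> l, \<phi> l'}"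
  by (simp add: inf_preserving_def effMeet_def)

lemma inf_preserving_effBot:
  "effect_space E \<Longrightarrow> inf_preserving E \<phi> \<Longrightarrow> \<phi> effBot = bInf {\<phi> effY, \<phi> (effNeg effY)}"
  by (metis effMeet_effY_effNeg_effY inf_preserving_effMeet effect_space_effY effect_space_effNeg)

lemma inf_preserving_Nb_const:
  assumes "effect_space E" "inf_preserving E \<phi>" "\<phi> (effNeg effY) = Nb" "\<phi> effY = Nb" "l \<in> E"
  shows "\<phi> l = Nb"
proof -
  have "\<phi> effBot = Nb"
    using assms by (simp add: inf_preserving_effBot)
  moreover have "\<phi> effBot = bInf {\<phi> effBot, \<phi> l}"
    using assms inf_preserving_effMeet[of E \<phi> effBot l]
    by (simp add: effMeet_effBot_left effect_space_effBot)
  ultimately have "bInf {Nb, \<phi> l} = Nb"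
    by simp
  then show ?thesis
    by (simp add: bInf_eq_iff)
qed

lemma inf_preserving_disjoint_not_both_Nb:
  assumes "effect_space E" "inf_preserving E \<phi>" "\<phi> (effNeg effY) = Nb" "\<phi> effY = Yb"
    and "l \<in> E" "l' \<in> E" "effMeet l l' = effBot"
  shows "\<not> (\<phi> l = Nb \<and> \<phi> l' = Nb)"
proof
  assume "\<phi> l = Nb \<and> \<phi> l' = Nb"
  then have "\<phi> effBot = Nb"
    using assms inf_preserving_effMeet[of E \<phi> l l'] by simp
  moreover have "\<phi> effBot = Bt"
    using assms by (simp add: inf_preserving_effBot bInf_def)
  ultimately show False
    by simp
qed

lemma inf_preserving_pointwise_bInf:
  assumes E: "effect_space E" and R: "R \<noteq> {}" "\<forall>\<phi>\<in>R. inf_preserving E \<phi>"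
    and \<psi>: "\<forall>l\<in>E. \<psi> l = bInf ((\<lambda>\<phi>. \<phi> l) ` R)"
  shows "inf_preserving E \<psi>"
  unfolding inf_preserving_def
proof (intro allI impI)
  fix L assume L: "L \<subseteq> E \<and> L \<noteq> {}"
  have "\<psi> (effInf L) = bInf ((\<lambda>\<phi>. \<phi> (effInf L)) ` R)"
    using \<psi> L E by (simp add: effect_space_effInf)
  also have "\<dots> = bInf ((\<lambda>\<phi>. bInf (\<phi> ` L)) ` R)"
    using R(2) L by (simp add: inf_preserving_def)
  also have "\<dots> = bInf ((\<lambda>l. bInf ((\<lambda>\<phi>. \<phi> l) ` R)) ` L)"
    using bInf_image_commute[of R L "\<lambda>\<phi> l. \<phi> l"] R(1) L by simp
  also have "\<dots> = bInf (\<psi> ` L)"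
    using \<psi> L by (intro arg_cong[where f = bInf] image_cong) auto
  finally show "\<psi> (effInf L) = bInf (\<psi> ` L)" .
qed

lemma neg_preserving_pointwise_bInf:
  assumes E: "effect_space E" and R: "\<forall>\<phi>\<in>R. neg_preserving E \<phi>"
    and \<psi>: "\<forall>l\<in>E. \<psi> l = bInf ((\<lambda>\<phi>. \<phi> l) ` R)"
  shows "neg_preserving E \<psi>"
  unfolding neg_preserving_def
proof
  fix l assume l: "l \<in> E"
  have "\<psi> (effNeg l) = bInf ((\<lambda>\<phi>. bneg (\<phi> l)) ` R)"
    using \<psi> R E l by (simp add: effect_space_effNeg neg_preserving_def)
  also have "\<dots> = bneg (\<psi> l)"
    using bInf_image_bneg[of "(\<lambda>\<phi>. \<phi> l) ` R"] \<psi> l by (simp add: image_image)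
  finally show "\<psi> (effNeg l) = bneg (\<psi> l)" .
qed

lemma regular_slice_pointwise_bInf_disjoint:
  assumes E: "effect_space E"
    and R: "R \<noteq> {}" "\<forall>\<phi>\<in>R. inf_preserving E \<phi> \<and> regular_slice E \<phi>"
    and \<psi>: "\<forall>l\<in>E. \<psi> l = bInf ((\<lambda>\<phi>. \<phi> l) ` R)" and \<psi>_Y: "\<psi> effY = Bt"
    and l: "l \<in> E" "l' \<in> E" "effMeet l l' = effBot"
  shows "\<psi> l \<noteq> Yb \<and> \<psi> l' \<noteq> Yb \<and> (\<psi> l = Bt \<or> \<psi> l' = Bt)"
proof -
  have \<psi>_eq: "\<psi> l = v \<longleftrightarrow> (\<forall>\<phi>\<in>R. \<phi> l = v)" if "l \<in> E" "v \<noteq> Bt" for l v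
    using \<psi> R(1) that by (simp add: bInf_eq_iff)
  have \<psi>_le: "ble (\<psi> l) (\<phi> l)" if "l \<in> E" "\<phi> \<in> R" for l \<phi>
    using \<psi> that by (simp add: bInf_lower)
  show ?thesis
  proof (cases "\<exists>\<phi>\<in>R. \<phi> effY = Bt")
    case True
    then obtain \<phi> where "\<phi> \<in> R" "\<phi> effY = Bt"
      by blast
    then have "\<phi> l \<noteq> Yb \<and> \<phi> l' \<noteq> Yb \<and> (\<phi> l = Bt \<or> \<phi> l' = Bt)"
      using R(2) l by (auto simp: regular_slice_def)
    then show ?thesis
      using \<psi>_le[OF l(1) \<open>\<phi> \<in> R\<close>] \<psi>_le[OF l(2) \<open>\<phi> \<in> R\<close>] by (auto simp: ble_def)
  next
    case False
    have "\<not> (\<forall>\<phi>\<in>R. \<phi> effY = v)" if "v \<noteq> Bt" for v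
      using \<psi>_eq[OF effect_space_effY[OF E] that] \<psi>_Y that by simp
    then obtain \<phi>\<^sub>N \<phi>\<^sub>Y where "\<phi>\<^sub>N \<in> R" "\<phi>\<^sub>N effY \<noteq> Yb" "\<phi>\<^sub>Y \<in> R" "\<phi>\<^sub>Y effY \<noteq> Nb"
      by blast
    with False have \<phi>\<^sub>N: "\<phi>\<^sub>N \<in> R" "\<phi>\<^sub>N effY = Nb" and \<phi>\<^sub>Y: "\<phi>\<^sub>Y \<in> R" "\<phi>\<^sub>Y effY = Yb"
      by (metis bv.exhaust)+
    have \<phi>\<^sub>N_slice: "inf_preserving E \<phi>\<^sub>N" "\<phi>\<^sub>N (effNeg effY) = Nb"
      using \<phi>\<^sub>N(1) R(2) by (auto simp: regular_slice_def)
    have "\<phi>\<^sub>N l = Nb" "\<phi>\<^sub>N l' = Nb"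
      using inf_preserving_Nb_const[OF E \<phi>\<^sub>N_slice \<phi>\<^sub>N(2)] l by simp_all
    then have not_Yb: "\<psi> l \<noteq> Yb" "\<psi> l' \<noteq> Yb"
      using \<psi>_le[OF l(1) \<phi>\<^sub>N(1)] \<psi>_le[OF l(2) \<phi>\<^sub>N(1)] by (auto simp: ble_def)
    have \<phi>\<^sub>Y_slice: "inf_preserving E \<phi>\<^sub>Y" "\<phi>\<^sub>Y (effNeg effY) = Nb"
      using \<phi>\<^sub>Y(1) R(2) by (auto simp: regular_slice_def)
    have "\<not> (\<phi>\<^sub>Y l = Nb \<and> \<phi>\<^sub>Y l' = Nb)"
      using inf_preserving_disjoint_not_both_Nb[OF E \<phi>\<^sub>Y_slice \<phi>\<^sub>Y(2) l] .
    then have "\<not> (\<psi> l = Nb \<and> \<psi> l' = Nb)"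
      using \<psi>_eq l \<phi>\<^sub>Y(1) by blast
    with not_Yb show ?thesis
      by (metis bv.exhaust)
  qed
qed

lemma regular_slice_pointwise_bInf:
  assumes E: "effect_space E"
    and R: "R \<noteq> {}" "\<forall>\<phi>\<in>R. inf_preserving E \<phi> \<and> regular_slice E \<phi>"
    and \<psi>: "\<forall>l\<in>E. \<psi> l = bInf ((\<lambda>\<phi>. \<phi> l) ` R)"
  shows "regular_slice E \<psi>"
proof -
  have Y: "effY \<in> E"
    using E by (rule effect_space_effY)
  have \<psi>_eq: "\<psi> l = v \<longleftrightarrow> (\<forall>\<phi>\<in>R. \<phi> l = v)" if "l \<in> E" "v \<noteq> Bt" for l v
    using \<psi> R(1) that by (simp add: bInf_eq_iff)
  have "\<psi> (effNeg effY) = Nb"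
    using \<psi>_eq R(2) Y E by (simp add: regular_slice_def effect_space_effNeg)
  moreover have "neg_preserving E \<psi>" if "\<psi> effY = Yb"
    using that \<psi>_eq[OF Y] R(2)
    by (intro neg_preserving_pointwise_bInf[OF E _ \<psi>]) (auto simp: regular_slice_def)
  ultimately show ?thesis
    using regular_slice_pointwise_bInf_disjoint[OF E R \<psi>] unfolding regular_slice_def by blast
qed

lemma neg_preserving_eval:
  assumes "effect_space E" "\<forall>l\<in>E. \<phi> l = l s"
  shows "neg_preserving E \<phi>"
  unfolding neg_preserving_def
proof
  fix l assume "l \<in> E"
  then have "\<phi> (effNeg l) = effNeg l s" "\<phi> l = l s"
    using assms by (simp_all add: effect_space_effNeg)
  then show "\<phi> (effNeg l) = bneg (\<phi> l)"
    by (simp add: effNeg_def)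
qed

lemma inf_preserving_bprod_eval:
  assumes "effect_space E" "\<forall>l\<in>E. \<phi> l = bprod c (l s)"
  shows "inf_preserving E \<phi>"
  unfolding inf_preserving_def
proof (intro allI impI)
  fix L assume L: "L \<subseteq> E \<and> L \<noteq> {}"
  have "\<phi> (effInf L) = bprod c (effInf L s)"
    using assms L by (simp add: effect_space_effInf)
  also have "\<dots> = bprod c (bInf ((\<lambda>l. l s) ` L))"
    by (simp add: effInf_def)
  also have "\<dots> = bInf (\<phi> ` L)"
    using assms(2) L by (simp add: bprod_bInf_right image_image subset_iff cong: image_cong)
  finally show "\<phi> (effInf L) = bInf (\<phi> ` L)" .
qed

lemma regular_slice_bprod_eval:
  assumes E: "effect_space E" and \<phi>: "\<forall>l\<in>E. \<phi> l = bprod c (l s)"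
  shows "regular_slice E \<phi>"
proof -
  have "\<phi> effY = bprod c (effY s)" "\<phi> (effNeg effY) = bprod c (effNeg effY s)"
    using \<phi> E by (simp_all add: effect_space_effY effect_space_effNeg)
  then have \<phi>_Y: "\<phi> effY = c" and "\<phi> (effNeg effY) = Nb"
    by (simp_all add: effY_def effNeg_def)
  moreover have "neg_preserving E \<phi>" if "c = Yb"
    using that \<phi> by (intro neg_preserving_eval[OF E, of _ s]) simp
  moreover have "\<phi> l \<noteq> Yb \<and> \<phi> l' \<noteq> Yb \<and> (\<phi> l = Bt \<or> \<phi> l' = Bt)"
    if "c = Bt" "l \<in> E" "l' \<in> E" "effMeet l l' = effBot" for l l'
    using that \<phi> effMeet_eq_effBot_not_both_Nb[of l l' s]
    by (cases "l s"; cases "l' s") auto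
  ultimately show ?thesis
    unfolding regular_slice_def \<phi>_Y by blast
qed

lemma maxTensor_iff:
  "\<Phi> \<in> maxTensor EA EB \<longleftrightarrow>
     (\<forall>lA lB. \<not> (lA \<in> EA \<and> lB \<in> EB) \<longrightarrow> \<Phi> lA lB = Bt) \<and>
     (\<forall>lA\<in>EA. inf_preserving EB (\<Phi> lA)) \<and> (\<forall>lB\<in>EB. inf_preserving EA (\<lambda>lA. \<Phi> lA lB)) \<and>
     neg_preserving EA (\<lambda>lA. \<Phi> lA effY) \<and> neg_preserving EB (\<Phi> effY) \<and> \<Phi> effY effY = Yb"
  by (simp add: maxTensor_def inf_preserving_def neg_preserving_def)

lemma pair_mem_neg_iff: "(x, y) \<in> {(Yb, Nb), (Nb, Yb), (Bt, Bt)} \<longleftrightarrow> y = bneg x"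
  by (cases x; cases y) auto

lemma pair_mem_bot_iff:
  "(x, y) \<in> {(Bt, Nb), (Nb, Bt), (Bt, Bt)} \<longleftrightarrow> x \<noteq> Yb \<and> y \<noteq> Yb \<and> (x = Bt \<or> y = Bt)"
  by (cases x; cases y) auto

lemma regTensor_iff:
  "\<Phi> \<in> regTensor EA EB \<longleftrightarrow> \<Phi> \<in> maxTensor EA EB \<and>
     (\<forall>lA\<in>EA. regular_slice EB (\<Phi> lA)) \<and> (\<forall>lB\<in>EB. regular_slice EA (\<lambda>lA. \<Phi> lA lB))"
  unfolding regTensor_def regular_slice_def neg_preserving_def pair_mem_neg_iff pair_mem_bot_iff
  by blast

lemma bimapInf_row:
  "lA \<in> EA \<Longrightarrow> \<forall>lB\<in>EB. bimapInf EA EB F lA lB = bInf ((\<lambda>\<phi>. \<phi> lB) ` (\<lambda>\<Phi>. \<Phi> lA) ` F)"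
  by (simp add: bimapInf_def image_image)

lemma bimapInf_column:
  "lB \<in> EB \<Longrightarrow> \<forall>lA\<in>EA. bimapInf EA EB F lA lB = bInf ((\<lambda>\<phi>. \<phi> lA) ` (\<lambda>\<Phi> lA. \<Phi> lA lB) ` F)"
  by (simp add: bimapInf_def image_image)

lemma bimapInf_in_maxTensor:
  assumes EA: "effect_space EA" and EB: "effect_space EB"
    and F: "F \<subseteq> maxTensor EA EB" "F \<noteq> {}"
  shows "bimapInf EA EB F \<in> maxTensor EA EB"
  unfolding maxTensor_iff
proof (intro conjI ballI allI impI)
  show "bimapInf EA EB F lA lB = Bt" if "\<not> (lA \<in> EA \<and> lB \<in> EB)" for lA lB
    using that by (auto simp: bimapInf_def)
  show "inf_preserving EB (bimapInf EA EB F lA)" if "lA \<in> EA" for lA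
    using F that by (intro inf_preserving_pointwise_bInf[OF EB _ _ bimapInf_row])
      (auto simp: maxTensor_iff)
  show "inf_preserving EA (\<lambda>lA. bimapInf EA EB F lA lB)" if "lB \<in> EB" for lB
    using F that by (intro inf_preserving_pointwise_bInf[OF EA _ _ bimapInf_column])
      (auto simp: maxTensor_iff)
  show "neg_preserving EA (\<lambda>lA. bimapInf EA EB F lA effY)"
    using F EB by (intro neg_preserving_pointwise_bInf[OF EA _ bimapInf_column])
      (auto simp: maxTensor_iff effect_space_effY)
  show "neg_preserving EB (bimapInf EA EB F effY)"
    using F EA by (intro neg_preserving_pointwise_bInf[OF EB _ bimapInf_row])
      (auto simp: maxTensor_iff effect_space_effY)
  show "bimapInf EA EB F effY effY = Yb"
    using F EA EB by (auto simp: bimapInf_def bInf_eq_iff maxTensor_iff effect_space_effY)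
qed

lemma bimapInf_in_regTensor:
  assumes EA: "effect_space EA" and EB: "effect_space EB"
    and F: "F \<subseteq> regTensor EA EB" "F \<noteq> {}"
  shows "bimapInf EA EB F \<in> regTensor EA EB"
  unfolding regTensor_iff
proof (intro conjI ballI)
  have F_max: "F \<subseteq> maxTensor EA EB"
    using F by (auto simp: regTensor_iff)
  then show "bimapInf EA EB F \<in> maxTensor EA EB"
    using bimapInf_in_maxTensor[OF EA EB _ F(2)] by blast
  show "regular_slice EB (bimapInf EA EB F lA)" if "lA \<in> EA" for lA
    using F F_max that
    by (intro regular_slice_pointwise_bInf[OF EB _ _ bimapInf_row])
      (auto simp: regTensor_iff maxTensor_iff)
  show "regular_slice EA (\<lambda>lA. bimapInf EA EB F lA lB)" if "lB \<in> EB" for lB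
    using F F_max that
    by (intro regular_slice_pointwise_bInf[OF EA _ _ bimapInf_column])
      (auto simp: regTensor_iff maxTensor_iff)
qed

lemma bimapInf_lower: "\<Phi> \<in> F \<Longrightarrow> bimapLe EA EB (bimapInf EA EB F) \<Phi>"
  by (simp add: bimapLe_def bimapInf_def bInf_lower)

lemma bimapInf_greatest:
  "F \<noteq> {} \<Longrightarrow> (\<And>\<Phi>. \<Phi> \<in> F \<Longrightarrow> bimapLe EA EB \<Psi> \<Phi>) \<Longrightarrow> bimapLe EA EB \<Psi> (bimapInf EA EB F)"
  by (auto simp: bimapLe_def bimapInf_def intro: bInf_greatest)

definition pureTensor :: "('a \<Rightarrow> bv) set \<Rightarrow> ('b \<Rightarrow> bv) set \<Rightarrow> 'a \<Rightarrow> 'b \<Rightarrow> ('a, 'b) bimap" where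
  "pureTensor EA EB \<sigma>A \<sigma>B = (\<lambda>lA lB. if lA \<in> EA \<and> lB \<in> EB then bprod (lA \<sigma>A) (lB \<sigma>B) else Bt)"

lemma pureTensor_in_regTensor:
  assumes EA: "effect_space EA" and EB: "effect_space EB"
  shows "pureTensor EA EB \<sigma>A \<sigma>B \<in> regTensor EA EB"
proof -
  let ?T = "pureTensor EA EB \<sigma>A \<sigma>B"
  have row: "\<forall>lB\<in>EB. ?T lA lB = bprod (lA \<sigma>A) (lB \<sigma>B)" if "lA \<in> EA" for lA
    using that by (simp add: pureTensor_def)
  have column: "\<forall>lA\<in>EA. ?T lA lB = bprod (lB \<sigma>B) (lA \<sigma>A)" if "lB \<in> EB" for lB
    using that by (simp add: pureTensor_def bprod_comm)
  have "?T \<in> maxTensor EA EB"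
    unfolding maxTensor_iff
  proof (intro conjI ballI allI impI)
    show "?T lA lB = Bt" if "\<not> (lA \<in> EA \<and> lB \<in> EB)" for lA lB
      using that by (auto simp: pureTensor_def)
    show "inf_preserving EB (?T lA)" if "lA \<in> EA" for lA
      using inf_preserving_bprod_eval[OF EB row[OF that]] .
    show "inf_preserving EA (\<lambda>lA. ?T lA lB)" if "lB \<in> EB" for lB
      using inf_preserving_bprod_eval[OF EA column[OF that]] .
    show "neg_preserving EA (\<lambda>lA. ?T lA effY)"
      using column[OF effect_space_effY[OF EB]]
      by (intro neg_preserving_eval[OF EA, of _ \<sigma>A]) (simp add: effY_def)
    show "neg_preserving EB (?T effY)"
      using row[OF effect_space_effY[OF EA]]
      by (intro neg_preserving_eval[OF EB, of _ \<sigma>B]) (simp add: effY_def)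
    show "?T effY effY = Yb"
      using row[OF effect_space_effY[OF EA]] effect_space_effY[OF EB] by (simp add: effY_def)
  qed
  then show ?thesis
    unfolding regTensor_iff
    using regular_slice_bprod_eval[OF EB row] regular_slice_bprod_eval[OF EA column] by blast
qed

lemma minTensor_eq_bimapInf_pureTensor:
  "minTensor EA EB = {bimapInf EA EB ((\<lambda>(\<sigma>A, \<sigma>B). pureTensor EA EB \<sigma>A \<sigma>B) ` P) | P. P \<noteq> {}}"
proof -
  have "bimapInf EA EB ((\<lambda>(\<sigma>A, \<sigma>B). pureTensor EA EB \<sigma>A \<sigma>B) ` P) =
    (\<lambda>lA lB. if lA \<in> EA \<and> lB \<in> EB then bInf ((\<lambda>(\<sigma>A, \<sigma>B). bprod (lA \<sigma>A) (lB \<sigma>B)) ` P) else Bt)"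
    for P :: "('a \<times> 'b) set"
    by (auto simp: bimapInf_def pureTensor_def image_image case_prod_beta
        intro!: ext arg_cong[where f = bInf])
  then show ?thesis
    by (auto simp: minTensor_def)
qed

theorem mainTheorem17:
  fixes EA :: "('a \<Rightarrow> bv) set" and EB :: "('b \<Rightarrow> bv) set"
  assumes "effect_space EA" and "effect_space EB"
  shows "regTensor EA EB \<subseteq> maxTensor EA EB
     \<and> (\<forall>F. F \<subseteq> regTensor EA EB \<and> F \<noteq> {} \<longrightarrow>
           bimapInf EA EB F \<in> regTensor EA EB
         \<and> (\<forall>\<Phi>\<in>F. bimapLe EA EB (bimapInf EA EB F) \<Phi>)
         \<and> (\<forall>\<Psi>\<in>maxTensor EA EB. (\<forall>\<Phi>\<in>F. bimapLe EA EB \<Psi> \<Phi>) \<longrightarrow>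
              bimapLe EA EB \<Psi> (bimapInf EA EB F)))
     \<and> minTensor EA EB \<subseteq> regTensor EA EB"
proof (intro conjI allI impI ballI subsetI)
  show "\<Phi> \<in> maxTensor EA EB" if "\<Phi> \<in> regTensor EA EB" for \<Phi>
    using that by (simp add: regTensor_iff)
next
  fix F assume F: "F \<subseteq> regTensor EA EB \<and> F \<noteq> {}"
  then show "bimapInf EA EB F \<in> regTensor EA EB"
    using bimapInf_in_regTensor[OF assms] by blast
  show "bimapLe EA EB (bimapInf EA EB F) \<Phi>" if "\<Phi> \<in> F" for \<Phi>
    using that by (rule bimapInf_lower)
  show "bimapLe EA EB \<Psi> (bimapInf EA EB F)" if "\<forall>\<Phi>\<in>F. bimapLe EA EB \<Psi> \<Phi>" for \<Psi>
    using F that by (blast intro: bimapInf_greatest)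
next
  fix \<Phi> assume "\<Phi> \<in> minTensor EA EB"
  then obtain P where "P \<noteq> {}" and "\<Phi> = bimapInf EA EB ((\<lambda>(\<sigma>A, \<sigma>B). pureTensor EA EB \<sigma>A \<sigma>B) ` P)"
    by (auto simp: minTensor_eq_bimapInf_pureTensor)
  moreover have "(\<lambda>(\<sigma>A, \<sigma>B). pureTensor EA EB \<sigma>A \<sigma>B) ` P \<subseteq> regTensor EA EB"
    using pureTensor_in_regTensor[OF assms] by auto
  ultimately show "\<Phi> \<in> regTensor EA EB"
    using bimapInf_in_regTensor[OF assms] by blast
qed

end
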